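(* There exist $\mathtt r_0,\mathtt c_*>0$ such that, for any $0<\mathtt r\le\mathtt r_0$ and any choice of tangential sites $S^+=\{\overline{\jmath}_1,\dots,\overline{\jmath}_\nu\}\in\mathcal V(\mathtt r)$, the $\nu\times\nu$ matrix $$\mathbb A:=\frac12\mathbb D\,\mathrm{diag}\Big(\frac{\lambda(2j)}{2\lambda(j)-\lambda(2j)}\Big)_{j\in S^+}+\mathbb D\,\mathbb B,\qquad \mathbb D:=\mathrm{diag}(\lambda(j))_{j\in S^+},$$ with $\mathbb B_j^k=\mathtt b_{jk}$ for $j\ne k$ and $\mathbb B_j^j=0$, where $$\mathtt b_{jk}=\frac23\frac{(1+k^2)(1+j^2)(2+k^2+j^2)}{(3+k^2+j^2+kj)(3+k^2+j^2-kj)},$$ satisfies $|\det\mathbb A|\ge\mathtt c_*\,\overline{\jmath}_1^{\,3\nu}$.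
   Context: $\nu\ge2$ is fixed, $\lambda(j)=j\frac{4+j^2}{1+j^2}$. For $\mathtt r\in(0,1)$, a set $S^+=\{\overline{\jmath}_1,\dots,\overline{\jmath}_\nu\}$ of $\nu$ distinct positive integers with $\overline{\jmath}_1=\max_i\overline{\jmath}_i$ belongs to $\mathcal V(\mathtt r)$ if $\min_i\overline{\jmath}_i>1/\mathtt r$, $|\overline{\jmath}_i/\overline{\jmath}_1-1|\le\mathtt r$ for all $i$, and $\sum_i\frac{\overline{\jmath}_i}{1+\overline{\jmath}_i^2}\ell_i\ne0$ for all $\ell\in\mathbb{Z}^\nu$ with $\sum_i|\ell_i|=4$. The rows and columns of $\mathbb A$ are indexed by $S^+$. *)

theory Defs
  imports Complex_Main "Jordan_Normal_Form.Determinant"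
begin

definition lam :: "real \<Rightarrow> real" where
  "lam j = j * (4 + j^2) / (1 + j^2)"

definition bcoef :: "real \<Rightarrow> real \<Rightarrow> real" where
  "bcoef j k = 2/3 * ((1 + k^2) * (1 + j^2) * (2 + k^2 + j^2))
                / ((3 + k^2 + j^2 + k*j) * (3 + k^2 + j^2 - k*j))"

definition Vset :: "nat \<Rightarrow> real \<Rightarrow> nat set set" where
  "Vset nu r = {S. 0 < r \<and> r < 1 \<and> finite S \<and> card S = nu \<and> (\<forall>j\<in>S. 0 < j) \<and>
      real (Min S) > 1 / r \<and>
      (\<forall>j\<in>S. \<bar>real j / real (Max S) - 1\<bar> \<le> r) \<and>
      (\<forall>l :: nat \<Rightarrow> int. (\<Sum>j\<in>S. \<bar>l j\<bar>) = 4 \<longrightarrow>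
          (\<Sum>j\<in>S. real j / (1 + (real j)^2) * real_of_int (l j)) \<noteq> 0)}"

definition Aentry :: "nat \<Rightarrow> nat \<Rightarrow> real" where
  "Aentry j k =
     (if j = k then 1/2 * lam (real j) * (lam (2 * real j) / (2 * lam (real j) - lam (2 * real j))) else 0)
     + lam (real j) * (if j = k then 0 else bcoef (real j) (real k))"

text \<open>The matrix A as a nu x nu matrix, indexing S by its elements in increasing order
  (the determinant does not depend on the chosen enumeration).\<close>
definition Amat :: "nat set \<Rightarrow> real mat" where
  "Amat S = (let xs = sorted_list_of_set S in
     mat (card S) (card S) (\<lambda>(a, b). Aentry (xs ! a) (xs ! b)))"

end

theory Submission
  imports Defs "HOL-Analysis.Elementary_Metric_Spaces"
begin

(* Let J be the largest site. Each entry of A divided by J^3 is a rational function of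
   j/J, k/J and 1/J, continuous at (1, 1, 0); for sites in V(r) this point is approached
   as r tends to 0, and there the diagonal entries tend to 2/9 and the off-diagonal ones
   to 4/9. The limit matrix has eigenvalues -2/9 and (4 nu - 2)/9, hence a nonzero
   determinant, and since the determinant is Lipschitz on bounded sets of matrices,
   |det (A / J^3)| stays above half of its limit for r small. *)

(* Aentry j k / J^3 in the variables x = j/J, y = k/J, t = 1/J, for j = k and j \<noteq> k. *)
definition diag_profile :: "real \<Rightarrow> real \<Rightarrow> real" where
  "diag_profile x t = 2 * (4 * t^2 + x^2) * (t^2 + x^2) / (9 * x)"

definition offdiag_profile :: "real \<Rightarrow> real \<Rightarrow> real \<Rightarrow> real" where
  "offdiag_profile x y t = x * (4 * t^2 + x^2) / (t^2 + x^2) *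
     (2/3 * ((t^2 + y^2) * (t^2 + x^2) * (2 * t^2 + x^2 + y^2))
       / ((3 * t^2 + x^2 + y^2 + x * y) * (3 * t^2 + x^2 + y^2 - x * y)))"

lemma lam_double_gap:
  fixes j :: real
  shows "2 * lam j - lam (2 * j) = 18 * j^3 / ((1 + j^2) * (1 + 4 * j^2))"
proof -
  have "1 + j^2 > 0" "1 + (2 * j)^2 > 0" "1 + 4 * j^2 > 0" by (simp_all add: add_pos_nonneg)
  then show ?thesis
    unfolding lam_def by (simp add: divide_simps) (simp add: algebra_simps power2_eq_square power3_eq_cube)
qed

lemma diag_coefficient_eq:
  fixes j :: real
  assumes "j > 0"
  shows "1/2 * lam j * (lam (2 * j) / (2 * lam j - lam (2 * j))) = 2 * (4 + j^2) * (1 + j^2) / (9 * j)"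
proof -
  have pos: "1 + j^2 > 0" "1 + 4 * j^2 > 0" by (simp_all add: add_pos_nonneg)
  have double: "lam (2 * j) = 8 * j * (1 + j^2) / (1 + 4 * j^2)"
    unfolding lam_def by (simp add: field_simps power2_eq_square)
  have "lam (2 * j) / (2 * lam j - lam (2 * j)) = 4 * (1 + j^2)^2 / (9 * j^2)"
    unfolding lam_double_gap unfolding double using pos assms
    by (simp add: divide_simps) (simp add: algebra_simps power2_eq_square power3_eq_cube)
  then show ?thesis
    unfolding lam_def using pos assms
    by (simp add: divide_simps) (simp add: algebra_simps power2_eq_square power3_eq_cube)
qed

lemma diag_profile_scaled:
  fixes j J :: real
  assumes "j > 0" "J > 0"
  shows "2 * (4 + j^2) * (1 + j^2) / (9 * j) / J^3 = diag_profile (j / J) (1 / J)"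
  using assms unfolding diag_profile_def by (simp add: field_simps power2_eq_square power3_eq_cube)

lemma sum_squares_add_mult_pos:
  fixes c x y :: real
  assumes "c > 0"
  shows "c + x^2 + y^2 + x * y > 0" and "c + x^2 + y^2 - x * y > 0"
proof -
  have "x^2 + y^2 + x * y = (x + y/2)^2 + 3/4 * y^2" "x^2 + y^2 - x * y = (x - y/2)^2 + 3/4 * y^2"
    by (simp_all add: power2_eq_square algebra_simps)
  moreover have "(x + y/2)^2 + 3/4 * y^2 \<ge> 0" "(x - y/2)^2 + 3/4 * y^2 \<ge> 0"
    by simp_all
  ultimately show "c + x^2 + y^2 + x * y > 0" and "c + x^2 + y^2 - x * y > 0"
    using assms by linarith+
qed

lemma offdiag_profile_scaled:
  fixes j k J :: real
  assumes "j > 0" "J > 0"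
  shows "lam j * bcoef j k / J^3 = offdiag_profile (j / J) (k / J) (1 / J)"
proof -
  define x y t where "x = j / J" and "y = k / J" and "t = 1 / J"
  have subst: "j = J * x" "1 + j^2 = J^2 * (t^2 + x^2)" "1 + k^2 = J^2 * (t^2 + y^2)"
    "4 + j^2 = J^2 * (4 * t^2 + x^2)" "2 + k^2 + j^2 = J^2 * (2 * t^2 + x^2 + y^2)"
    "3 + k^2 + j^2 + k * j = J^2 * (3 * t^2 + x^2 + y^2 + x * y)"
    "3 + k^2 + j^2 - k * j = J^2 * (3 * t^2 + x^2 + y^2 - x * y)"
    using assms unfolding x_def y_def t_def by (simp_all add: field_simps power2_eq_square)
  have t: "t > 0" using assms by (simp add: t_def)
  have pos: "t^2 + x^2 > 0" "3 * t^2 + x^2 + y^2 + x * y > 0" "3 * t^2 + x^2 + y^2 - x * y > 0"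
    using sum_squares_add_mult_pos[of "3 * t^2" x y] t by (simp_all add: add_pos_nonneg)
  have "lam j * bcoef j k / J^3
     = (J * x) * (J^2 * (4 * t^2 + x^2)) / (J^2 * (t^2 + x^2)) *
       (2/3 * ((J^2 * (t^2 + y^2)) * (J^2 * (t^2 + x^2)) * (J^2 * (2 * t^2 + x^2 + y^2)))
        / ((J^2 * (3 * t^2 + x^2 + y^2 + x * y)) * (J^2 * (3 * t^2 + x^2 + y^2 - x * y)))) / J^3"
    unfolding lam_def bcoef_def subst(2-) by (simp only: subst(1)[symmetric])
  also have "\<dots> = offdiag_profile x y t"
  proof -
    have cancel: "(J * x) * (J^2 * P) / (J^2 * B) * (2/3 * ((J^2 * A) * (J^2 * B) * (J^2 * C))
          / ((J^2 * D) * (J^2 * E))) / J^3 = x * P / B * (2/3 * (A * B * C) / (D * E))"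
      if "B \<noteq> 0" "D \<noteq> 0" "E \<noteq> 0" for P A B C D E
      using that assms by (simp add: field_simps power2_eq_square power3_eq_cube)
    show ?thesis
      unfolding offdiag_profile_def by (rule cancel) (use pos in linarith)+
  qed
  finally show ?thesis unfolding x_def y_def t_def .
qed

lemma dist_Pair_le: "dist (a, b) (c, d) \<le> dist a c + dist b d"
  by (simp add: dist_Pair_Pair sqrt_sum_squares_le_sum)

lemma profiles_near_limit:
  assumes "e > 0"
  obtains \<delta> where "\<delta> > 0"
    and "\<And>x y t. \<bar>x - 1\<bar> < \<delta> \<Longrightarrow> \<bar>y - 1\<bar> < \<delta> \<Longrightarrow> \<bar>t\<bar> < \<delta> \<Longrightarrow>
           \<bar>diag_profile x t - 2/9\<bar> < e \<and> \<bar>offdiag_profile x y t - 4/9\<bar> < e"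
proof -
  have "continuous (at (1, 0)) (\<lambda>p. diag_profile (fst p) (snd p))"
    unfolding diag_profile_def by (intro continuous_intros) simp_all
  moreover have "diag_profile 1 0 = 2/9"
    by (simp add: diag_profile_def)
  ultimately obtain \<delta>1 where "\<delta>1 > 0"
    and \<delta>1: "\<And>p. dist p (1, 0) < \<delta>1 \<Longrightarrow> dist (diag_profile (fst p) (snd p)) (2/9) < e"
    using \<open>e > 0\<close> unfolding continuous_at_eps_delta by fastforce
  have "continuous (at (1, 1, 0)) (\<lambda>p. offdiag_profile (fst p) (fst (snd p)) (snd (snd p)))"
    unfolding offdiag_profile_def by (intro continuous_intros) simp_all
  moreover have "offdiag_profile 1 1 0 = 4/9"
    by (simp add: offdiag_profile_def)
  ultimately obtain \<delta>2 where "\<delta>2 > 0"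
    and \<delta>2: "\<And>p. dist p (1, 1, 0) < \<delta>2 \<Longrightarrow> dist (offdiag_profile (fst p) (fst (snd p)) (snd (snd p))) (4/9) < e"
    using \<open>e > 0\<close> unfolding continuous_at_eps_delta by fastforce
  show ?thesis
  proof
    show "min \<delta>1 \<delta>2 / 3 > 0" using \<open>\<delta>1 > 0\<close> \<open>\<delta>2 > 0\<close> by simp
    fix x y t :: real
    assume "\<bar>x - 1\<bar> < min \<delta>1 \<delta>2 / 3" "\<bar>y - 1\<bar> < min \<delta>1 \<delta>2 / 3" "\<bar>t\<bar> < min \<delta>1 \<delta>2 / 3"
    moreover have "dist (x, t) (1, 0) \<le> \<bar>x - 1\<bar> + \<bar>t\<bar>"
      using dist_Pair_le[of x t 1 0] by (simp add: dist_real_def)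
    moreover have "dist (x, y, t) (1, 1, 0) \<le> \<bar>x - 1\<bar> + \<bar>y - 1\<bar> + \<bar>t\<bar>"
      using dist_Pair_le[of x "(y, t)" 1 "(1, 0)"] dist_Pair_le[of y t 1 0] by (simp add: dist_real_def)
    ultimately have "dist (x, t) (1, 0) < \<delta>1" "dist (x, y, t) (1, 1, 0) < \<delta>2"
      by linarith+
    then show "\<bar>diag_profile x t - 2/9\<bar> < e \<and> \<bar>offdiag_profile x y t - 4/9\<bar> < e"
      using \<delta>1[of "(x, t)"] \<delta>2[of "(x, y, t)"] by (simp add: dist_real_def)
  qed
qed

lemma Aentry_asymptotics:
  assumes "e > 0"
  obtains \<delta> where "\<delta> > 0"
    and "\<And>j k J. 0 < j \<Longrightarrow> 0 < J \<Longrightarrow> \<bar>real j / J - 1\<bar> < \<delta> \<Longrightarrow> \<bar>real k / J - 1\<bar> < \<delta> \<Longrightarrow> 1 / J < \<delta> \<Longrightarrow>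
           \<bar>Aentry j k / J^3 - (if j = k then 2/9 else 4/9)\<bar> < e"
proof -
  obtain \<delta> where "\<delta> > 0" and near: "\<And>x y t. \<bar>x - 1\<bar> < \<delta> \<Longrightarrow> \<bar>y - 1\<bar> < \<delta> \<Longrightarrow> \<bar>t\<bar> < \<delta> \<Longrightarrow>
      \<bar>diag_profile x t - 2/9\<bar> < e \<and> \<bar>offdiag_profile x y t - 4/9\<bar> < e"
    using profiles_near_limit[OF assms] by blast
  show ?thesis
  proof (rule that[OF \<open>\<delta> > 0\<close>])
    fix j k :: nat and J :: real
    assume j: "0 < j" and J: "0 < J"
      and close: "\<bar>real j / J - 1\<bar> < \<delta>" "\<bar>real k / J - 1\<bar> < \<delta>" "1 / J < \<delta>"
    have "Aentry j k / J^3 = (if j = k then diag_profile (j / J) (1 / J) else offdiag_profile (j / J) (k / J) (1 / J))"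
    proof (cases "j = k")
      case True
      have "Aentry j j / J^3 = 2 * (4 + (real j)^2) * (1 + (real j)^2) / (9 * real j) / J^3"
        unfolding Aentry_def if_P[OF refl] diag_coefficient_eq[OF of_nat_0_less_iff[THEN iffD2, OF j]] by simp
      also have "\<dots> = diag_profile (j / J) (1 / J)"
        using j J by (simp only: diag_profile_scaled of_nat_0_less_iff)
      finally show ?thesis using True by simp
    next
      case False
      then show ?thesis using j J by (simp add: Aentry_def offdiag_profile_scaled)
    qed
    then show "\<bar>Aentry j k / J^3 - (if j = k then 2/9 else 4/9)\<bar> < e"
      using near[OF close(1,2), of "1 / J"] close(3) J by (cases "j = k") simp_all
  qed
qed

lemma abs_prod_diff_le:
  fixes a b :: "'i \<Rightarrow> real"
  assumes "finite I"
    and "\<And>i. i \<in> I \<Longrightarrow> \<bar>a i\<bar> \<le> C" "\<And>i. i \<in> I \<Longrightarrow> \<bar>b i\<bar> \<le> C" "\<And>i. i \<in> I \<Longrightarrow> \<bar>a i - b i\<bar> \<le> d"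
  shows "\<bar>prod a I - prod b I\<bar> \<le> real (card I) * C ^ (card I - 1) * d"
  using assms
proof (induction I rule: finite_induct)
  case empty
  then show ?case by simp
next
  case (insert x F)
  let ?n = "card F"
  have ax: "\<bar>a x\<bar> \<le> C" and dx: "\<bar>a x - b x\<bar> \<le> d"
    by (simp_all add: insert.prems)
  then have "0 \<le> C" "0 \<le> d" by linarith+
  have IH: "\<bar>prod a F - prod b F\<bar> \<le> real ?n * C ^ (?n - 1) * d"
    by (rule insert.IH) (simp_all add: insert.prems)
  have "\<bar>prod b F\<bar> \<le> (\<Prod>i\<in>F. C)"
    unfolding abs_prod by (rule prod_mono) (simp add: insert.prems)
  then have bound_b: "\<bar>prod b F\<bar> \<le> C ^ ?n" by simp
  have "prod a (insert x F) - prod b (insert x F) = a x * (prod a F - prod b F) + (a x - b x) * prod b F"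
    using insert.hyps by (simp add: algebra_simps)
  then have "\<bar>prod a (insert x F) - prod b (insert x F)\<bar>
      \<le> \<bar>a x\<bar> * \<bar>prod a F - prod b F\<bar> + \<bar>a x - b x\<bar> * \<bar>prod b F\<bar>"
    by (metis abs_mult abs_triangle_ineq)
  also have "\<dots> \<le> C * (real ?n * C ^ (?n - 1) * d) + d * C ^ ?n"
    by (intro add_mono mult_mono ax dx IH bound_b \<open>0 \<le> C\<close> \<open>0 \<le> d\<close> abs_ge_zero)
  also have "C * (real ?n * C ^ (?n - 1) * d) = real ?n * C ^ ?n * d"
    by (cases ?n) simp_all
  finally show ?case
    using insert.hyps by (simp add: algebra_simps)
qed

lemma abs_det_diff_le:
  fixes M N :: "real mat"
  assumes M: "M \<in> carrier_mat n n" and N: "N \<in> carrier_mat n n"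
    and "\<And>i j. i < n \<Longrightarrow> j < n \<Longrightarrow> \<bar>M $$ (i, j)\<bar> \<le> C"
    and "\<And>i j. i < n \<Longrightarrow> j < n \<Longrightarrow> \<bar>N $$ (i, j)\<bar> \<le> C"
    and "\<And>i j. i < n \<Longrightarrow> j < n \<Longrightarrow> \<bar>N $$ (i, j) - M $$ (i, j)\<bar> \<le> d"
  shows "\<bar>det N - det M\<bar> \<le> fact n * (real n * C ^ (n - 1) * d)"
proof -
  let ?P = "{p. p permutes {0..<n}}"
  let ?PN = "\<lambda>p. \<Prod>i=0..<n. N $$ (i, p i)" and ?PM = "\<lambda>p. \<Prod>i=0..<n. M $$ (i, p i)"
  have sign: "\<bar>signof p :: real\<bar> = 1" for p :: "nat \<Rightarrow> nat"
    by (simp add: sign_def)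
  have diff: "det N - det M = (\<Sum>p\<in>?P. signof p * (?PN p - ?PM p))"
    unfolding det_def'[OF M] det_def'[OF N] by (simp only: right_diff_distrib sum_subtractf)
  have "\<bar>det N - det M\<bar> \<le> (\<Sum>p\<in>?P. \<bar>signof p * (?PN p - ?PM p)\<bar>)"
    unfolding diff by (rule sum_abs)
  also have "\<dots> = (\<Sum>p\<in>?P. \<bar>?PN p - ?PM p\<bar>)"
    by (simp only: abs_mult sign mult_1)
  also have "\<dots> \<le> (\<Sum>p\<in>?P. real n * C ^ (n - 1) * d)"
  proof (rule sum_mono)
    fix p assume "p \<in> ?P"
    then have p: "p i < n" if "i < n" for i
      using permutes_in_image[of p "{0..<n}" i] that by simp
    have "\<bar>?PN p - ?PM p\<bar> \<le> real (card {0..<n}) * C ^ (card {0..<n} - 1) * d"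
      by (rule abs_prod_diff_le) (simp_all add: p assms(3-5))
    then show "\<bar>?PN p - ?PM p\<bar> \<le> real n * C ^ (n - 1) * d"
      by simp
  qed
  also have "\<dots> = real (card ?P) * (real n * C ^ (n - 1) * d)"
    by (rule sum_constant)
  also have "card ?P = fact n"
    using card_permutations[of "{0..<n}" n] by simp
  finally show ?thesis by simp
qed

lemma det_stable_near:
  fixes M :: "real mat"
  assumes M: "M \<in> carrier_mat n n" and "det M \<noteq> 0"
  obtains e where "e > 0"
    and "\<And>N. N \<in> carrier_mat n n \<Longrightarrow> (\<And>i j. i < n \<Longrightarrow> j < n \<Longrightarrow> \<bar>N $$ (i, j) - M $$ (i, j)\<bar> \<le> e) \<Longrightarrow>
           \<bar>det M\<bar> / 2 \<le> \<bar>det N\<bar>"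
proof -
  define C where "C = 1 + (\<Sum>i<n. \<Sum>j<n. \<bar>M $$ (i, j)\<bar>)"
  define K where "K = fact n * (real n * C ^ (n - 1))"
  define e where "e = min 1 (\<bar>det M\<bar> / (2 * (K + 1)))"
  have "C \<ge> 1" unfolding C_def by (simp add: sum_nonneg)
  then have "K \<ge> 0" by (simp add: K_def)
  have M_bound: "\<bar>M $$ (i, j)\<bar> \<le> C - 1" if "i < n" "j < n" for i j
  proof -
    have "\<bar>M $$ (i, j)\<bar> \<le> (\<Sum>j<n. \<bar>M $$ (i, j)\<bar>)"
      using that by (intro member_le_sum) auto
    also have "\<dots> \<le> (\<Sum>i<n. \<Sum>j<n. \<bar>M $$ (i, j)\<bar>)"
      using that by (intro member_le_sum[where f = "\<lambda>i. \<Sum>j<n. \<bar>M $$ (i, j)\<bar>"]) (auto intro: sum_nonneg)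
    finally show ?thesis by (simp add: C_def)
  qed
  show ?thesis
  proof
    show "e > 0" using \<open>det M \<noteq> 0\<close> \<open>K \<ge> 0\<close> by (simp add: e_def)
    fix N assume N: "N \<in> carrier_mat n n"
      and close: "\<And>i j. i < n \<Longrightarrow> j < n \<Longrightarrow> \<bar>N $$ (i, j) - M $$ (i, j)\<bar> \<le> e"
    have "e \<le> 1" by (simp add: e_def)
    have "\<bar>det N - det M\<bar> \<le> fact n * (real n * C ^ (n - 1) * e)"
    proof (rule abs_det_diff_le[OF M N])
      fix i j assume ij: "i < n" "j < n"
      show "\<bar>N $$ (i, j) - M $$ (i, j)\<bar> \<le> e" using close[OF ij] .
      show "\<bar>M $$ (i, j)\<bar> \<le> C" using M_bound[OF ij] by linarith
      have "\<bar>N $$ (i, j)\<bar> \<le> \<bar>N $$ (i, j) - M $$ (i, j)\<bar> + \<bar>M $$ (i, j)\<bar>"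
        using abs_triangle_ineq[of "N $$ (i, j) - M $$ (i, j)" "M $$ (i, j)"] by simp
      then show "\<bar>N $$ (i, j)\<bar> \<le> C" using M_bound[OF ij] close[OF ij] \<open>e \<le> 1\<close> by linarith
    qed
    also have "\<dots> = K * e" by (simp add: K_def)
    also have "\<dots> \<le> (K + 1) * (\<bar>det M\<bar> / (2 * (K + 1)))"
      using \<open>K \<ge> 0\<close> \<open>e > 0\<close> by (intro mult_mono) (auto simp: e_def)
    also have "\<dots> = \<bar>det M\<bar> / 2" using \<open>K \<ge> 0\<close> by (simp add: field_simps add_nonneg_pos)
    finally show "\<bar>det M\<bar> / 2 \<le> \<bar>det N\<bar>" by linarith
  qed
qed

lemma det_two_valued_mat_neq_0:
  fixes a b :: real
  assumes "a \<noteq> b" and "a + (real n - 1) * b \<noteq> 0"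
  shows "det (mat n n (\<lambda>(i, j). if i = j then a else b)) \<noteq> 0"
proof
  let ?M = "mat n n (\<lambda>(i, j). if i = j then a else b)"
  assume "det ?M = 0"
  then obtain v where v: "v \<in> carrier_vec n" "v \<noteq> 0\<^sub>v n" "?M *\<^sub>v v = 0\<^sub>v n"
    using det_0_iff_vec_prod_zero[of ?M n] by auto
  define s where "s = (\<Sum>j<n. v $ j)"
  have row: "(a - b) * v $ i + b * s = 0" if "i < n" for i
  proof -
    have "0 = (?M *\<^sub>v v) $ i" using v(3) that by simp
    also have "\<dots> = (\<Sum>j<n. b * v $ j + (if i = j then (a - b) * v $ j else 0))"
      using that v(1) by (simp add: scalar_prod_def atLeast0LessThan) (rule sum.cong; auto simp: algebra_simps)
    also have "\<dots> = b * s + (a - b) * v $ i"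
      using that by (simp add: sum.distrib sum_distrib_left s_def)
    finally show ?thesis by simp
  qed
  have "(a + (real n - 1) * b) * s = (a - b) * s + real n * (b * s)"
    by (simp add: algebra_simps)
  also have "\<dots> = (\<Sum>i<n. (a - b) * v $ i + b * s)"
    by (simp add: sum.distrib sum_distrib_left s_def)
  also have "\<dots> = 0"
    using row by simp
  finally have "s = 0" using assms(2) by simp
  then have "v $ i = 0" if "i < n" for i
    using row[OF that] assms(1) by simp
  then have "v = 0\<^sub>v n" using v(1) by (intro eq_vecI) auto
  with v(2) show False by simp
qed

definition Amat_limit :: "nat \<Rightarrow> real mat" where
  "Amat_limit n = mat n n (\<lambda>(i, j). if i = j then 2/9 else 4/9)"

definition Amat_scaled :: "nat set \<Rightarrow> real mat" where
  "Amat_scaled S = (1 / real (Max S) ^ 3) \<cdot>\<^sub>m Amat S"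

lemma det_Amat_limit_neq_0: "det (Amat_limit n) \<noteq> 0"
  unfolding Amat_limit_def
proof (rule det_two_valued_mat_neq_0)
  have "n = 0 \<or> real n \<ge> 1" by (cases n) auto
  then show "2/9 + (real n - 1) * (4/9) \<noteq> (0 :: real)" by (auto simp: field_simps)
qed simp

lemma Vset_Max_pos:
  assumes "S \<in> Vset nu r" and "nu > 0"
  shows "Max S > 0"
proof -
  have "finite S" "card S = nu" "\<forall>j\<in>S. 0 < j"
    using assms(1) unfolding Vset_def mem_Collect_eq by blast+
  then have "Max S \<in> S" using assms(2) by (intro Max_in) auto
  then show ?thesis using \<open>\<forall>j\<in>S. 0 < j\<close> by blast
qed

lemma Amat_carrier:
  assumes "S \<in> Vset nu r"
  shows "Amat S \<in> carrier_mat nu nu"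
proof -
  have "card S = nu" using assms by (simp add: Vset_def)
  then show ?thesis by (simp add: Amat_def Let_def)
qed

lemma abs_det_Amat:
  assumes "S \<in> Vset nu r" and "nu > 0"
  shows "\<bar>det (Amat S)\<bar> = real (Max S) ^ (3 * nu) * \<bar>det (Amat_scaled S)\<bar>"
  using Vset_Max_pos[OF assms] Amat_carrier[OF assms(1)] unfolding Amat_scaled_def
  by (simp add: det_smult abs_mult power_mult power_one_over)

lemma Amat_scaled_near_limit:
  assumes "e > 0" and "nu > 0"
  obtains r0 where "r0 > 0"
    and "\<And>r S a b. 0 < r \<Longrightarrow> r \<le> r0 \<Longrightarrow> S \<in> Vset nu r \<Longrightarrow> a < nu \<Longrightarrow> b < nu \<Longrightarrow>
           \<bar>Amat_scaled S $$ (a, b) - Amat_limit nu $$ (a, b)\<bar> \<le> e"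
proof -
  obtain \<delta> where "\<delta> > 0" and near: "\<And>j k J. 0 < j \<Longrightarrow> 0 < J \<Longrightarrow> \<bar>real j / J - 1\<bar> < \<delta> \<Longrightarrow>
      \<bar>real k / J - 1\<bar> < \<delta> \<Longrightarrow> 1 / J < \<delta> \<Longrightarrow> \<bar>Aentry j k / J^3 - (if j = k then 2/9 else 4/9)\<bar> < e"
    using Aentry_asymptotics[OF assms(1)] by blast
  show ?thesis
  proof (rule that[of "\<delta> / 2"])
    show "\<delta> / 2 > 0" using \<open>\<delta> > 0\<close> by simp
    fix r S a b
    assume r: "0 < r" "r \<le> \<delta> / 2" and S: "S \<in> Vset nu r" and ab: "a < nu" "b < nu"
    from S have fin: "finite S" and card: "card S = nu" and pos: "\<forall>j\<in>S. 0 < j"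
      and Min: "real (Min S) > 1 / r" and close: "\<forall>j\<in>S. \<bar>real j / real (Max S) - 1\<bar> \<le> r"
      unfolding Vset_def mem_Collect_eq by blast+
    define J where "J = real (Max S)"
    have "J > 0" using Vset_Max_pos[OF S assms(2)] by (simp add: J_def)
    have "S \<noteq> {}" using card assms(2) by auto
    then have "real (Min S) \<le> J" using fin by (simp add: J_def)
    then have "1 / r < J" using Min by linarith
    then have "1 / J < r" using r \<open>J > 0\<close> by (simp add: field_simps)
    then have "1 / J < \<delta>" using r by linarith
    define xs where "xs = sorted_list_of_set S"
    have xs: "length xs = nu" "distinct xs" "set xs = S" using fin card by (simp_all add: xs_def)
    have in_S: "xs ! a \<in> S" "xs ! b \<in> S" using xs ab nth_mem by blast+
    then have "\<bar>real (xs ! a) / J - 1\<bar> < \<delta>" "\<bar>real (xs ! b) / J - 1\<bar> < \<delta>"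
      using close r \<open>\<delta> > 0\<close> unfolding J_def by fastforce+
    then have "\<bar>Aentry (xs ! a) (xs ! b) / J^3 - (if xs ! a = xs ! b then 2/9 else 4/9)\<bar> < e"
      using near[OF _ \<open>J > 0\<close> _ _ \<open>1 / J < \<delta>\<close>] in_S(1) pos by blast
    moreover have "xs ! a = xs ! b \<longleftrightarrow> a = b" using xs ab by (simp add: nth_eq_iff_index_eq)
    moreover have "Amat_scaled S $$ (a, b) = Aentry (xs ! a) (xs ! b) / J^3"
      using ab card by (simp add: Amat_scaled_def Amat_def Let_def xs_def J_def)
    ultimately show "\<bar>Amat_scaled S $$ (a, b) - Amat_limit nu $$ (a, b)\<bar> \<le> e"
      using ab by (simp add: Amat_limit_def)
  qed
qed

theorem lemma4p1:
  fixes nu :: nat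
  assumes "nu \<ge> 2"
  shows "\<exists>r0 > 0. \<exists>c > 0. \<forall>r S. 0 < r \<and> r \<le> r0 \<and> S \<in> Vset nu r \<longrightarrow>
           \<bar>det (Amat S)\<bar> \<ge> c * real (Max S) ^ (3 * nu)"
proof -
  let ?c = "\<bar>det (Amat_limit nu)\<bar> / 2"
  have "nu > 0" using assms by simp
  have "Amat_limit nu \<in> carrier_mat nu nu" by (simp add: Amat_limit_def)
  then obtain e where "e > 0" and stable: "\<And>N. N \<in> carrier_mat nu nu \<Longrightarrow>
      (\<And>i j. i < nu \<Longrightarrow> j < nu \<Longrightarrow> \<bar>N $$ (i, j) - Amat_limit nu $$ (i, j)\<bar> \<le> e) \<Longrightarrow> ?c \<le> \<bar>det N\<bar>"
    using det_stable_near det_Amat_limit_neq_0 by blast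
  obtain r0 where "r0 > 0" and near: "\<And>r S i j. 0 < r \<Longrightarrow> r \<le> r0 \<Longrightarrow> S \<in> Vset nu r \<Longrightarrow>
      i < nu \<Longrightarrow> j < nu \<Longrightarrow> \<bar>Amat_scaled S $$ (i, j) - Amat_limit nu $$ (i, j)\<bar> \<le> e"
    using Amat_scaled_near_limit[OF \<open>e > 0\<close> \<open>nu > 0\<close>] by blast
  have "?c * real (Max S) ^ (3 * nu) \<le> \<bar>det (Amat S)\<bar>" if "0 < r" "r \<le> r0" "S \<in> Vset nu r" for r S
  proof -
    have "Amat_scaled S \<in> carrier_mat nu nu"
      unfolding Amat_scaled_def using Amat_carrier[OF that(3)] by simp
    then have "?c \<le> \<bar>det (Amat_scaled S)\<bar>"
      using stable near[OF that] by blast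
    then have "?c * real (Max S) ^ (3 * nu) \<le> \<bar>det (Amat_scaled S)\<bar> * real (Max S) ^ (3 * nu)"
      by (rule mult_right_mono) simp
    then show ?thesis
      unfolding abs_det_Amat[OF that(3) \<open>nu > 0\<close>] by (metis mult.commute)
  qed
  moreover have "?c > 0" using det_Amat_limit_neq_0 by simp
  ultimately show ?thesis using \<open>r0 > 0\<close> by blast
qed

end
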